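(* For every integer $k\ge1$: (1) for every $(T,\mu)\in\mathcal M_k$, the root has at least one $1$-marked neighbor; (2) for every $(T,\mu)\in\mathcal M_k$ and every vertex $u$ of $T$, if $\mu(u)=1$ then $u$ is a leaf; (3) if $k\ge2$, each marked tree in $\mathcal M_k$ is obtained (by one of the two operations below) from exactly one marked tree in $\mathcal M_{k-1}$; (4) $|\mathcal M_k|=2^{k-1}$.
   Context: A marked tree is a pair $(T,\mu)$ with $T$ a rooted tree and $\mu:V(T)\to\{0,1\}$; marked trees are identified up to isomorphism of rooted marked trees. Define $\mathcal M_k$ (marked trees with $k$ edges) inductively: $\mathcal M_1=\{(T_1,\mu_1)\}$ where $T_1$ is a single edge, the root $v$ has $\mu_1(v)=0$ and its neighbor $u$ has $\mu_1(u)=1$. Given $\mathcal M_{k-1}$, $\mathcal M_k$ consists of all marked trees obtained from some element of $\mathcal M_{k-1}$ by exactly one of: (i) adding a new vertex $u$ with $\mu(u)=1$ as a neighbor of the root; (ii) choosing a $1$-marked neighbor $u$ of the root, making $u$ the new root with $\mu(u)=0$, and attaching a new $1$-marked leaf to $u$. Duplicates are included only once. *)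

theory Defs
  imports Main "HOL-Library.Multiset"
begin

text \<open>A rooted marked tree up to isomorphism of rooted marked trees is represented
canonically as an unordered tree: the mark of the root together with the multiset
of the (isomorphism classes of the) subtrees hanging at the children of the root.
The mark True stands for 1 and False for 0.\<close>

datatype mt = MT bool "mt multiset"

primrec mark :: "mt \<Rightarrow> bool" where
  "mark (MT b C) = b"

primrec children :: "mt \<Rightarrow> mt multiset" where
  "children (MT b C) = C"

text \<open>Multiset of (mark, degree) over all non-root vertices of a subtree hanging
below some parent (the degree counts the edge to the parent).\<close>
primrec nr_nodes :: "mt \<Rightarrow> (bool \<times> nat) multiset" where
  "nr_nodes (MT b C) = {#(b, size C + 1)#} + sum_mset (image_mset nr_nodes C)"

definition nodes :: "mt \<Rightarrow> (bool \<times> nat) multiset" where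
  "nodes t = {#(mark t, size (children t))#} + sum_mset (image_mset nr_nodes (children t))"

definition leaf1 :: mt where
  "leaf1 = MT True {#}"

definition op1 :: "mt \<Rightarrow> mt" where
  "op1 t = MT (mark t) (children t + {#leaf1#})"

text \<open>Operation (ii): for a 1-marked child u of the root, make u the new root with
mark 0 (the old root, with its remaining children, becomes a child of u) and attach
a new 1-marked leaf to u.\<close>
definition op2 :: "mt \<Rightarrow> mt \<Rightarrow> mt" where
  "op2 t u = MT False (children u + {#MT (mark t) (children t - {#u#}), leaf1#})"

definition obtained_from :: "mt \<Rightarrow> mt \<Rightarrow> bool" where
  "obtained_from t s \<longleftrightarrow>
     s = op1 t \<or> (\<exists>u. u \<in># children t \<and> mark u \<and> s = op2 t u)"

fun M :: "nat \<Rightarrow> mt set" where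
  "M 0 = {}"
| "M (Suc 0) = {MT False {#leaf1#}}"
| "M (Suc (Suc k)) = {s. \<exists>t \<in> M (Suc k). obtained_from t s}"

end

theory Submission
  imports Defs
begin

text \<open>Every tree in \<open>\<M>\<^sub>k\<close> has an unmarked root carrying a 1-marked leaf, and all its
1-marked vertices are leaves. On such a tree the only 1-marked neighbour of the root is a
leaf, so it has exactly the two successors \<open>op1 t\<close> and \<open>op2 t leaf1\<close>, and both have the
same shape again. Both operations are injective on these trees, and their images are
disjoint: the root of \<open>op1 t\<close> has at least two leaf children, the root of \<open>op2 t leaf1\<close>
exactly one.\<close>

lemma mark_leaf1 [simp]: "mark leaf1"
  and children_leaf1 [simp]: "children leaf1 = {#}"
  and nr_nodes_leaf1 [simp]: "nr_nodes leaf1 = {#(True, 1)#}"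
  by (simp_all add: leaf1_def)

lemma mt_collapse: "MT (mark t) (children t) = t"
  by (cases t) simp

definition leaf_marked :: "(bool \<times> nat) multiset \<Rightarrow> bool" where
  "leaf_marked N \<longleftrightarrow> (\<forall>m d. (m, d) \<in># N \<longrightarrow> m \<longrightarrow> d = 1)"

lemma leaf_marked_empty [simp]: "leaf_marked {#}"
  and leaf_marked_add_mset [simp]:
    "leaf_marked (add_mset (m, d) N) \<longleftrightarrow> (m \<longrightarrow> d = 1) \<and> leaf_marked N"
  unfolding leaf_marked_def by auto

lemma leaf_marked_add [simp]: "leaf_marked (A + B) \<longleftrightarrow> leaf_marked A \<and> leaf_marked B"
  unfolding leaf_marked_def by auto

lemma leaf_marked_sum_mset [simp]:
  "leaf_marked (\<Sum>\<^sub># (image_mset f C)) \<longleftrightarrow> (\<forall>c\<in>#C. leaf_marked (f c))"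
  by (induction C) auto

lemma leaf_marked_nodes:
  "leaf_marked (nodes t) \<longleftrightarrow>
     (mark t \<longrightarrow> size (children t) = 1) \<and> (\<forall>c\<in>#children t. leaf_marked (nr_nodes c))"
  by (simp add: nodes_def)

lemma marked_leaf_marked_eq_leaf1:
  assumes "leaf_marked (nr_nodes t)" and "mark t"
  shows "t = leaf1"
  using assms by (cases t) (simp add: leaf1_def)

definition well_marked :: "mt \<Rightarrow> bool" where
  "well_marked t \<longleftrightarrow> \<not> mark t \<and> leaf1 \<in># children t \<and> leaf_marked (nodes t)"

lemma well_marked_marked_child:
  assumes "well_marked t" and "u \<in># children t" and "mark u"
  shows "u = leaf1"
proof (rule marked_leaf_marked_eq_leaf1)
  show "leaf_marked (nr_nodes u)"
    using assms(1,2) by (simp add: well_marked_def leaf_marked_nodes)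
qed (fact assms(3))

lemma obtained_from_well_marked:
  assumes "well_marked t"
  shows "obtained_from t s \<longleftrightarrow> s = op1 t \<or> s = op2 t leaf1"
proof -
  have "leaf1 \<in># children t"
    using assms by (simp add: well_marked_def)
  moreover have "u = leaf1" if "u \<in># children t" and "mark u" for u
    using well_marked_marked_child[OF assms that] .
  ultimately show ?thesis
    unfolding obtained_from_def by (metis mark_leaf1)
qed

lemma well_marked_op1: "well_marked t \<Longrightarrow> well_marked (op1 t)"
  by (auto simp: well_marked_def op1_def leaf_marked_nodes)

lemma well_marked_op2: "well_marked t \<Longrightarrow> well_marked (op2 t leaf1)"
  by (auto simp: well_marked_def op2_def leaf_marked_nodes dest: in_diffD)

lemma well_marked_M: "t \<in> M (Suc k) \<Longrightarrow> well_marked t"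
proof (induction k arbitrary: t)
  case 0
  then show ?case
    by (simp add: well_marked_def leaf_marked_nodes)
next
  case (Suc k)
  then obtain t' where "t' \<in> M (Suc k)" and "obtained_from t' t"
    by auto
  with Suc.IH have "well_marked t'" and "t = op1 t' \<or> t = op2 t' leaf1"
    by (auto simp: obtained_from_well_marked)
  then show ?case
    using well_marked_op1 well_marked_op2 by blast
qed

lemma M_Suc_Suc: "M (Suc (Suc k)) = op1 ` M (Suc k) \<union> (\<lambda>t. op2 t leaf1) ` M (Suc k)"
  using obtained_from_well_marked[OF well_marked_M] by auto

lemma finite_M: "finite (M k)"
  by (induction k rule: M.induct) (simp_all only: M_Suc_Suc, auto)

lemma inj_op1: "inj op1"
  by (rule injI) (metis op1_def mt.inject add_right_cancel mt_collapse)

lemma inj_on_op2_leaf1: "inj_on (\<lambda>t. op2 t leaf1) {t. leaf1 \<in># children t}"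
proof (rule inj_onI)
  fix t t'
  assume "t \<in> {t. leaf1 \<in># children t}" and "t' \<in> {t. leaf1 \<in># children t}"
    and eq: "op2 t leaf1 = op2 t' leaf1"
  then have leaf1: "leaf1 \<in># children t" "leaf1 \<in># children t'"
    by simp_all
  from eq have "{#MT (mark t) (children t - {#leaf1#}), leaf1#}
              = {#MT (mark t') (children t' - {#leaf1#}), leaf1#}"
    by (simp add: op2_def)
  then have "MT (mark t) (children t - {#leaf1#}) = MT (mark t') (children t' - {#leaf1#})"
    by (metis add_mset_commute add_mset_add_mset_same_iff single_eq_single)
  then have "mark t = mark t'" and "children t - {#leaf1#} = children t' - {#leaf1#}"
    by simp_all
  with leaf1 have "mark t = mark t'" and "children t = children t'"
    by (metis insert_DiffM)+
  then show "t = t'"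
    by (cases t, cases t') simp
qed

lemma op1_neq_op2_leaf1:
  assumes "leaf1 \<in># children t" and "\<not> mark t'"
  shows "op1 t \<noteq> op2 t' leaf1"
proof
  assume eq: "op1 t = op2 t' leaf1"
  \<comment> \<open>the old root of \<open>t'\<close> is unmarked, so it is not a second copy of \<open>leaf1\<close>\<close>
  have "count (children (op2 t' leaf1)) leaf1 = 1"
    using assms(2) by (auto simp: op2_def leaf1_def)
  moreover have "count (children (op1 t)) leaf1 \<ge> 2"
    using assms(1) by (simp add: op1_def Suc_le_eq)
  ultimately show False
    using eq by simp
qed

lemma card_M: "card (M (Suc k)) = 2 ^ k"
proof (induction k)
  case 0
  then show ?case by simp
next
  case (Suc k)
  have "M (Suc k) \<subseteq> {t. leaf1 \<in># children t}"
    using well_marked_M by (auto simp: well_marked_def)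
  then have inj2: "inj_on (\<lambda>t. op2 t leaf1) (M (Suc k))"
    using inj_on_op2_leaf1 inj_on_subset by blast
  have "op1 t \<noteq> op2 t' leaf1" if "t \<in> M (Suc k)" and "t' \<in> M (Suc k)" for t t'
    using well_marked_M[OF that(1)] well_marked_M[OF that(2)] op1_neq_op2_leaf1
    unfolding well_marked_def by blast
  then have "op1 ` M (Suc k) \<inter> (\<lambda>t. op2 t leaf1) ` M (Suc k) = {}"
    by blast
  then have "card (M (Suc (Suc k))) = card (op1 ` M (Suc k)) + card ((\<lambda>t. op2 t leaf1) ` M (Suc k))"
    unfolding M_Suc_Suc by (rule card_Un_disjoint[rotated 2]) (simp_all add: finite_M)
  also have "\<dots> = 2 ^ Suc k"
    using Suc.IH inj2 inj_on_subset[OF inj_op1] by (simp add: card_image)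
  finally show ?case .
qed

lemma unique_predecessor:
  assumes "s \<in> M (Suc (Suc k))"
  shows "\<exists>!t. t \<in> M (Suc k) \<and> obtained_from t s"
proof (rule ex_ex1I)
  show "\<exists>t. t \<in> M (Suc k) \<and> obtained_from t s"
    using assms by auto
next
  fix t t'
  assume "t \<in> M (Suc k) \<and> obtained_from t s" and "t' \<in> M (Suc k) \<and> obtained_from t' s"
  then have "well_marked t" and "well_marked t'"
    and "s = op1 t \<or> s = op2 t leaf1" and "s = op1 t' \<or> s = op2 t' leaf1"
    using well_marked_M obtained_from_well_marked by blast+
  moreover from this(1,2)
  have wm: "leaf1 \<in># children t" "\<not> mark t" "leaf1 \<in># children t'" "\<not> mark t'"
    unfolding well_marked_def by blast+
  ultimately show "t = t'"
  proof (elim disjE)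
    assume "s = op1 t" and "s = op1 t'"
    then show ?thesis
      using inj_op1 by (simp add: inj_eq)
  next
    assume "s = op2 t leaf1" and "s = op2 t' leaf1"
    then show ?thesis
      using inj_onD[OF inj_on_op2_leaf1, of t t'] wm by simp
  qed (use op1_neq_op2_leaf1 wm in metis)+
qed

theorem lemma8p2:
  fixes k :: nat
  assumes "k \<ge> 1"
  shows "(\<forall>t \<in> M k. \<exists>u. u \<in># children t \<and> mark u)
       \<and> (\<forall>t \<in> M k. \<forall>m d. (m, d) \<in># nodes t \<longrightarrow> m \<longrightarrow> d = 1)
       \<and> (k \<ge> 2 \<longrightarrow> (\<forall>s \<in> M k. \<exists>!t. t \<in> M (k - 1) \<and> obtained_from t s))
       \<and> card (M k) = 2 ^ (k - 1)"
proof -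
  obtain j where k: "k = Suc j"
    using assms by (cases k) auto
  have "well_marked t" if "t \<in> M k" for t
    using that well_marked_M unfolding k by blast
  then have "\<forall>t \<in> M k. \<exists>u. u \<in># children t \<and> mark u"
    and "\<forall>t \<in> M k. \<forall>m d. (m, d) \<in># nodes t \<longrightarrow> m \<longrightarrow> d = 1"
    using mark_leaf1 unfolding well_marked_def leaf_marked_def by blast+
  moreover have "\<forall>s \<in> M k. \<exists>!t. t \<in> M (k - 1) \<and> obtained_from t s" if "k \<ge> 2"
  proof -
    obtain i where "k = Suc (Suc i)"
      using \<open>k \<ge> 2\<close> by (metis add_2_eq_Suc le_Suc_ex)
    then show ?thesis
      using unique_predecessor by simp
  qed
  ultimately show ?thesis
    using card_M[of j] by (simp add: k)
qed

end
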